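(* Assume the true joint propensity score factorizes as $\psi(t,z;\mathbf{x})=p(t,z\mid\mathbf{x})=\phi(z;\mathbf{x}_z)\,e(t;\mathbf{x}_t)$, and let $e_\eta$, $\phi_\eta$ be positive estimates satisfying the bounded odds-ratio condition: there exist $\Gamma_t\ge1$ and $\Gamma_z\ge1$ such that for all $t,\mathbf{x}_t$, $\frac{1}{\Gamma_t}\le \frac{e_\eta(t;\mathbf{x}_t)}{e(t;\mathbf{x}_t)}\le\Gamma_t$, and for all $z,\mathbf{x}_z$, $\frac{1}{\Gamma_z}\le\frac{\phi_\eta(z;\mathbf{x}_z)}{\phi(z;\mathbf{x}_z)}\le\Gamma_z$. Let the weights be $w_\eta(t,z,\mathbf{x})=\frac{1}{\phi_\eta(z;\mathbf{x}_z)e_\eta(t;\mathbf{x}_t)}$, let $\Phi:\mathcal{X}'\to\mathcal{R}$ be a one-to-one representation, and assume $\mathcal{R}$ is bounded with $\mathrm{diam}(\mathcal{R})=\sup_{r,r'\in\mathcal{R}}\|r-r'\|_2$. Then $$\mathcal{W}\big(p_\Phi(r)p(t,z),\,q_{\Phi,\eta}(r\mid t,z)p(t,z)\big)\le \mathrm{diam}(\mathcal{R})\sqrt{\log\Gamma_t+\log\Gamma_z}.$$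
   Context: Setting: each unit has combined features $\mathbf{x}\in\mathcal{X}'=\mathcal{X}\times\mathcal{X}^{|\mathcal{N}|}$ (own and neighbours' features), binary treatment $t\in\{0,1\}$ and neighbourhood exposure $z\in[0,1]$, with joint distribution having marginals $p(\mathbf{x})$, $p(t,z)$, conditionals $p(\mathbf{x}\mid t,z)$ and $p(t,z\mid\mathbf{x})$; overlap holds, i.e. $p(t,z\mid\mathbf{x})>0$. $\mathbf{x}_t$ and $\mathbf{x}_z$ are sub-vectors of $\mathbf{x}$ (the features directly affecting $t$ and $z$ respectively); $e(t;\mathbf{x}_t)=p(t\mid\mathbf{x}_t)$ is the individual propensity score and $\phi(z;\mathbf{x}_z)=p(z\mid\mathbf{x}_z)$ the neighbourhood propensity score. Reweighted distribution: $q_\eta(\mathbf{x}\mid t,z)=w_\eta(t,z,\mathbf{x})p(\mathbf{x}\mid t,z)/c(t,z)$ with $c(t,z)=\int w_\eta(t,z,\mathbf{x})p(\mathbf{x}\mid t,z)d\mathbf{x}$ (assumed finite). $p_\Phi(r)$ and $q_{\Phi,\eta}(r\mid t,z)$ are the distributions of $r=\Phi(\mathbf{x})$ under $p(\mathbf{x})$ and $q_\eta(\mathbf{x}\mid t,z)$. $p_\Phi(r)p(t,z)$ denotes the product distribution on $\mathcal{R}\times\{0,1\}\times[0,1]$, and $q_{\Phi,\eta}(r\mid t,z)p(t,z)$ the joint distribution with $(t,z)\sim p(t,z)$ and $r\sim q_{\Phi,\eta}(\cdot\mid t,z)$. $\mathcal{W}$ denotes the 1-Wasserstein distance between distributions on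 $\mathcal{R}\times\{0,1\}\times[0,1]$ with respect to the ground cost $d((r,t,z),(r',t',z'))=\|r-r'\|_2$. *)

theory Defs
  imports "HOL-Probability.Probability"
begin

definition couplings :: "'a measure \<Rightarrow> 'a measure \<Rightarrow> ('a \<times> 'a) measure set" where
  "couplings P Q = {\<gamma>. sets \<gamma> = sets (P \<Otimes>\<^sub>M Q) \<and> prob_space \<gamma> \<and>
                        distr \<gamma> P fst = P \<and> distr \<gamma> Q snd = Q}"

definition wasserstein1 :: "('a \<Rightarrow> 'a \<Rightarrow> real) \<Rightarrow> 'a measure \<Rightarrow> 'a measure \<Rightarrow> ennreal" where
  "wasserstein1 d P Q = (INF \<gamma>\<in>couplings P Q. \<integral>\<^sup>+ w. ennreal (d (fst w) (snd w)) \<partial>\<gamma>)"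

definition rep_cost :: "('r::euclidean_space \<times> bool \<times> real) \<Rightarrow> ('r \<times> bool \<times> real) \<Rightarrow> real" where
  "rep_cost a b = norm (fst a - fst b)"

text \<open>Reference measure for (t,z): counting measure on bool times Lebesgue measure on the reals.
  The joint density f x t z of (x,t,z) is w.r.t. mu (x) times tz_ref.\<close>

definition tz_ref :: "(bool \<times> real) measure" where
  "tz_ref = (count_space UNIV) \<Otimes>\<^sub>M lborel"

definition px :: "('x \<Rightarrow> bool \<Rightarrow> real \<Rightarrow> real) \<Rightarrow> 'x \<Rightarrow> real" where
  "px f x = (\<integral> tz. f x (fst tz) (snd tz) \<partial>tz_ref)"

definition ptz :: "'x measure \<Rightarrow> ('x \<Rightarrow> bool \<Rightarrow> real \<Rightarrow> real) \<Rightarrow> bool \<Rightarrow> real \<Rightarrow> real" where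
  "ptz \<mu> f t z = (\<integral> x. f x t z \<partial>\<mu>)"

definition psi :: "('x \<Rightarrow> bool \<Rightarrow> real \<Rightarrow> real) \<Rightarrow> 'x \<Rightarrow> bool \<Rightarrow> real \<Rightarrow> real" where
  "psi f x t z = f x t z / px f x"

definition cond_x :: "'x measure \<Rightarrow> ('x \<Rightarrow> bool \<Rightarrow> real \<Rightarrow> real) \<Rightarrow> 'x \<Rightarrow> bool \<Rightarrow> real \<Rightarrow> real" where
  "cond_x \<mu> f x t z = f x t z / ptz \<mu> f t z"

definition cnorm :: "'x measure \<Rightarrow> ('x \<Rightarrow> bool \<Rightarrow> real \<Rightarrow> real) \<Rightarrow> (bool \<Rightarrow> real \<Rightarrow> 'x \<Rightarrow> real)
                     \<Rightarrow> bool \<Rightarrow> real \<Rightarrow> real" where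
  "cnorm \<mu> f w t z = (\<integral> x. w t z x * cond_x \<mu> f x t z \<partial>\<mu>)"

definition q_cond :: "'x measure \<Rightarrow> ('x \<Rightarrow> bool \<Rightarrow> real \<Rightarrow> real) \<Rightarrow> (bool \<Rightarrow> real \<Rightarrow> 'x \<Rightarrow> real)
                     \<Rightarrow> 'x \<Rightarrow> bool \<Rightarrow> real \<Rightarrow> real" where
  "q_cond \<mu> f w x t z = w t z x * cond_x \<mu> f x t z / cnorm \<mu> f w t z"

definition target_space :: "('r::euclidean_space \<times> bool \<times> real) measure" where
  "target_space = borel \<Otimes>\<^sub>M (count_space UNIV \<Otimes>\<^sub>M borel)"

definition rep_map :: "('x \<Rightarrow> 'r) \<Rightarrow> 'x \<times> bool \<times> real \<Rightarrow> 'r \<times> bool \<times> real" where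
  "rep_map \<Phi> = (\<lambda>(x, t, z). (\<Phi> x, t, z))"

definition P_prod :: "'x measure \<Rightarrow> ('x \<Rightarrow> bool \<Rightarrow> real \<Rightarrow> real) \<Rightarrow> ('x \<Rightarrow> 'r::euclidean_space)
                      \<Rightarrow> ('r \<times> bool \<times> real) measure" where
  "P_prod \<mu> f \<Phi> =
     distr (density \<mu> (\<lambda>x. ennreal (px f x)) \<Otimes>\<^sub>M density tz_ref (\<lambda>tz. ennreal (ptz \<mu> f (fst tz) (snd tz))))
           target_space (rep_map \<Phi>)"

definition Q_joint :: "'x measure \<Rightarrow> ('x \<Rightarrow> bool \<Rightarrow> real \<Rightarrow> real) \<Rightarrow> (bool \<Rightarrow> real \<Rightarrow> 'x \<Rightarrow> real)
                      \<Rightarrow> ('x \<Rightarrow> 'r::euclidean_space) \<Rightarrow> ('r \<times> bool \<times> real) measure" where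
  "Q_joint \<mu> f w \<Phi> =
     distr (density (\<mu> \<Otimes>\<^sub>M tz_ref)
              (\<lambda>(x, t, z). ennreal (q_cond \<mu> f w x t z * ptz \<mu> f t z)))
           target_space (rep_map \<Phi>)"

end

theory Submission
  imports Defs
begin

(*
  Write \<Gamma> = \<Gamma>\<^sub>t \<Gamma>\<^sub>z. Where p(x) > 0, the factorisation \<psi> = \<phi> e and the odds-ratio bounds give
  p(x) / \<Gamma> \<le> w\<^sub>\<eta>(t,z,x) p(x,t,z) \<le> \<Gamma> p(x); integrating over x, c(t,z) p(t,z) lies in [1/\<Gamma>, \<Gamma>].
  Hence the density q\<^sub>\<eta>(x|t,z) p(t,z) dominates p(x) p(t,z) / \<Gamma>\<^sup>2, i.e. the reweighted law is a
  mixture \<kappa> P + (1 - \<kappa>) R of the product law P and some probability measure R, with \<kappa> = 1/\<Gamma>\<^sup>2.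
  Coupling the P-part with itself and the R-part independently with P moves mass only with
  probability 1 - \<kappa>, each time by at most the diameter of the representation space. Finally
  1 - 1/\<Gamma>\<^sup>2 \<le> sqrt(log \<Gamma>), since 2y\<^sup>2 \<le> -log(1 - y) for 0 \<le> y < 1.
*)

section \<open>Couplings of mixtures\<close>

text \<open>With probability \<kappa> a point drawn from A is paired with itself, otherwise with an
  independent draw from R; only the second branch contributes to the transport cost.\<close>

definition mixture_coupling ::
    "real \<Rightarrow> 'b measure \<Rightarrow> 'b measure \<Rightarrow> 'c measure \<Rightarrow> ('b \<Rightarrow> 'c) \<Rightarrow> ('c \<times> 'c) measure" where
  "mixture_coupling \<kappa> A R T g =
     distr (density (count_space UNIV \<Otimes>\<^sub>M (A \<Otimes>\<^sub>M R)) (\<lambda>(c, _). ennreal (if c then \<kappa> else 1 - \<kappa>)))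
       (T \<Otimes>\<^sub>M T) (\<lambda>(c, \<omega>, \<omega>'). (g \<omega>, g (if c then \<omega> else \<omega>')))"

lemma sets_mixture_coupling [simp]: "sets (mixture_coupling \<kappa> A R T g) = sets (T \<Otimes>\<^sub>M T)"
  by (simp add: mixture_coupling_def)

lemma nn_integral_mixture_coupling:
  assumes "prob_space A" "prob_space R" "sets R = sets A" "g \<in> measurable A T"
    and F: "F \<in> borel_measurable (T \<Otimes>\<^sub>M T)"
  shows "(\<integral>\<^sup>+ p. F p \<partial>mixture_coupling \<kappa> A R T g) =
           ennreal \<kappa> * (\<integral>\<^sup>+ \<omega>. F (g \<omega>, g \<omega>) \<partial>A) + ennreal (1 - \<kappa>) * (\<integral>\<^sup>+ p. F (g (fst p), g (snd p)) \<partial>(A \<Otimes>\<^sub>M R))"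
proof -
  interpret A: prob_space A by fact
  interpret R: prob_space R by fact
  interpret AR: pair_prob_space A R ..
  let ?S = "count_space UNIV \<Otimes>\<^sub>M (A \<Otimes>\<^sub>M R)"
  let ?w = "\<lambda>(c, _). ennreal (if c then \<kappa> else 1 - \<kappa>)"
  let ?h = "\<lambda>(c, \<omega>, \<omega>'). (g \<omega>, g (if c then \<omega> else \<omega>'))"
  have g[measurable]: "g \<in> measurable A T" by fact
  have snd_snd: "(\<lambda>q. snd (snd q)) \<in> measurable ?S A"
    using measurable_compose[OF measurable_snd measurable_snd, of "count_space UNIV" A R]
    unfolding measurable_cong_sets[OF refl assms(3)] .
  have h: "?h \<in> measurable ?S (T \<Otimes>\<^sub>M T)"
    using snd_snd unfolding split_beta' by measurable
  have w: "?w \<in> borel_measurable ?S"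
    unfolding split_beta' by measurable
  have Fh: "(\<lambda>q. F (?h q)) \<in> borel_measurable ?S"
    by (rule measurable_compose[OF h F])
  have wF: "(\<lambda>q. ?w q * F (?h q)) \<in> borel_measurable ?S"
    using w Fh by (rule borel_measurable_times_ennreal)
  have "(\<integral>\<^sup>+ p. F p \<partial>mixture_coupling \<kappa> A R T g) = (\<integral>\<^sup>+ q. ?w q * F (?h q) \<partial>?S)"
    unfolding mixture_coupling_def
    by (subst nn_integral_distr) (use h F in \<open>simp_all add: nn_integral_density[OF w Fh]\<close>)
  also have "\<dots> = (\<integral>\<^sup>+ c. \<integral>\<^sup>+ p. ?w (c, p) * F (?h (c, p)) \<partial>(A \<Otimes>\<^sub>M R) \<partial>count_space UNIV)"
    by (rule sigma_finite_measure.nn_integral_fst[symmetric, OF _ wF])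
       (rule prob_space_imp_sigma_finite[OF AR.P.prob_space_axioms])
  also have "\<dots> = ennreal \<kappa> * (\<integral>\<^sup>+ p. F (g (fst p), g (fst p)) \<partial>(A \<Otimes>\<^sub>M R))
                 + ennreal (1 - \<kappa>) * (\<integral>\<^sup>+ p. F (g (fst p), g (snd p)) \<partial>(A \<Otimes>\<^sub>M R))"
  proof -
    have gR: "g \<in> measurable R T"
      using g unfolding measurable_cong_sets[OF assms(3) refl] .
    have "(\<lambda>p. F (g (fst p), g (fst p))) \<in> borel_measurable (A \<Otimes>\<^sub>M R)"
      "(\<lambda>p. F (g (fst p), g (snd p))) \<in> borel_measurable (A \<Otimes>\<^sub>M R)"
      using F gR by measurable
    then show ?thesis
      by (simp add: nn_integral_count_space_finite UNIV_bool split_beta' nn_integral_cmult)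
  qed
  also have "(\<integral>\<^sup>+ p. F (g (fst p), g (fst p)) \<partial>(A \<Otimes>\<^sub>M R)) = (\<integral>\<^sup>+ \<omega>. F (g \<omega>, g \<omega>) \<partial>A)"
    using R.nn_integral_fst[of "\<lambda>p. F (g (fst p), g (fst p))" A] F by (simp add: R.emeasure_space_1)
  finally show ?thesis .
qed

lemma nn_integral_indicator_distr:
  assumes "g \<in> measurable M T" "X \<in> sets T"
  shows "(\<integral>\<^sup>+ \<omega>. indicator X (g \<omega>) \<partial>M) = emeasure (distr M T g) X"
proof -
  have "(\<integral>\<^sup>+ \<omega>. indicator X (g \<omega>) \<partial>M) = (\<integral>\<^sup>+ x. indicator X x \<partial>distr M T g)"
    by (rule nn_integral_distr[symmetric]) (use assms in auto)
  also have "\<dots> = emeasure (distr M T g) X"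
    using assms by simp
  finally show ?thesis .
qed

lemma prob_space_mixture_coupling:
  assumes A: "prob_space A" and R: "prob_space R" and "sets R = sets A" and g: "g \<in> measurable A T"
    and \<kappa>: "0 \<le> \<kappa>" "\<kappa> \<le> 1"
  shows "prob_space (mixture_coupling \<kappa> A R T g)"
proof (rule prob_spaceI)
  let ?\<gamma> = "mixture_coupling \<kappa> A R T g"
  have "emeasure ?\<gamma> (space ?\<gamma>) = (\<integral>\<^sup>+ p. 1 \<partial>?\<gamma>)"
    by simp
  also have "\<dots> = ennreal \<kappa> + ennreal (1 - \<kappa>)"
    using A R by (subst nn_integral_mixture_coupling[OF assms(1-4)])
      (simp_all add: prob_space.emeasure_space_1 prob_space.emeasure_space_1[OF prob_space_pair])
  also have "\<dots> = 1"
    using \<kappa> by (simp add: ennreal_plus[symmetric] del: ennreal_plus)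
  finally show "emeasure ?\<gamma> (space ?\<gamma>) = 1" .
qed

lemma distr_fst_mixture_coupling:
  assumes A: "prob_space A" and R: "prob_space R" and "sets R = sets A" and g: "g \<in> measurable A T"
    and \<kappa>: "0 \<le> \<kappa>" "\<kappa> \<le> 1"
  shows "distr (mixture_coupling \<kappa> A R T g) (distr A T g) fst = distr A T g"
proof (rule measure_eqI)
  interpret R: prob_space R by fact
  let ?\<gamma> = "mixture_coupling \<kappa> A R T g"
  fix X assume "X \<in> sets (distr ?\<gamma> (distr A T g) fst)"
  then have X: "X \<in> sets T" by simp
  have fst: "fst \<in> measurable ?\<gamma> (distr A T g)"
    by (simp add: measurable_cong_sets[OF sets_mixture_coupling refl])
  have "emeasure (distr ?\<gamma> (distr A T g) fst) X = (\<integral>\<^sup>+ p. indicator X (fst p) \<partial>?\<gamma>)"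
    using X by (simp add: nn_integral_indicator_distr[OF fst])
  also have "\<dots> = (ennreal \<kappa> + ennreal (1 - \<kappa>)) * emeasure (distr A T g) X"
    using R.nn_integral_fst[of "\<lambda>p. indicator X (g (fst p))" A] g X
    by (simp add: nn_integral_mixture_coupling[OF assms(1-4)] nn_integral_indicator_distr
        R.emeasure_space_1 distrib_right)
  also have "ennreal \<kappa> + ennreal (1 - \<kappa>) = 1"
    using \<kappa> by (simp add: ennreal_plus[symmetric] del: ennreal_plus)
  finally show "emeasure (distr ?\<gamma> (distr A T g) fst) X = emeasure (distr A T g) X"
    by simp
qed simp

lemma distr_snd_mixture_coupling:
  assumes A: "prob_space A" and R: "prob_space R" and "sets R = sets A" "sets Q = sets A"
    and g: "g \<in> measurable A T"
    and mix: "\<And>S. S \<in> sets A \<Longrightarrow> emeasure Q S = ennreal \<kappa> * emeasure A S + ennreal (1 - \<kappa>) * emeasure R S"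
  shows "distr (mixture_coupling \<kappa> A R T g) (distr Q T g) snd = distr Q T g"
proof (rule measure_eqI)
  interpret A: prob_space A by fact
  interpret R: prob_space R by fact
  interpret AR: pair_prob_space A R ..
  let ?\<gamma> = "mixture_coupling \<kappa> A R T g"
  have gR: "g \<in> measurable R T"
    using g unfolding measurable_cong_sets[OF assms(3) refl] .
  have gQ: "g \<in> measurable Q T"
    using g unfolding measurable_cong_sets[OF assms(4) refl] .
  fix X assume "X \<in> sets (distr ?\<gamma> (distr Q T g) snd)"
  then have X: "X \<in> sets T" by simp
  have snd: "snd \<in> measurable ?\<gamma> (distr Q T g)"
    by (simp add: measurable_cong_sets[OF sets_mixture_coupling refl])
  have "emeasure (distr ?\<gamma> (distr Q T g) snd) X = (\<integral>\<^sup>+ p. indicator X (snd p) \<partial>?\<gamma>)"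
    using X by (simp add: nn_integral_indicator_distr[OF snd])
  also have "\<dots> = ennreal \<kappa> * emeasure (distr A T g) X + ennreal (1 - \<kappa>) * emeasure (distr R T g) X"
    using AR.nn_integral_snd[of "\<lambda>p. indicator X (g (snd p))"] g gR X
    by (simp add: nn_integral_mixture_coupling[OF assms(1-3) g] nn_integral_indicator_distr A.emeasure_space_1)
  also have "\<dots> = emeasure Q (g -` X \<inter> space A)"
    using X g gR sets_eq_imp_space_eq[OF assms(3)]
    by (simp add: emeasure_distr mix[OF measurable_sets[OF g X]])
  also have "\<dots> = emeasure (distr Q T g) X"
    using X gQ sets_eq_imp_space_eq[OF assms(4)] by (simp add: emeasure_distr)
  finally show "emeasure (distr ?\<gamma> (distr Q T g) snd) X = emeasure (distr Q T g) X" .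
qed simp

lemma mixture_coupling_in_couplings:
  assumes "prob_space A" "prob_space R" "sets R = sets A" "sets Q = sets A"
    and "g \<in> measurable A T" "0 \<le> \<kappa>" "\<kappa> \<le> 1"
    and "\<And>S. S \<in> sets A \<Longrightarrow> emeasure Q S = ennreal \<kappa> * emeasure A S + ennreal (1 - \<kappa>) * emeasure R S"
  shows "mixture_coupling \<kappa> A R T g \<in> couplings (distr A T g) (distr Q T g)"
proof -
  have "sets (mixture_coupling \<kappa> A R T g) = sets (distr A T g \<Otimes>\<^sub>M distr Q T g)"
    using sets_pair_measure_cong[of "distr A T g" T "distr Q T g" T] by simp
  then show ?thesis
    using prob_space_mixture_coupling[OF assms(1-3,5-7)] distr_fst_mixture_coupling[OF assms(1-3,5-7)]
      distr_snd_mixture_coupling[OF assms(1-5,8)]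
    by (simp add: couplings_def)
qed

lemma wasserstein1_mixture_le:
  assumes A: "prob_space A" and R: "prob_space R" and "sets R = sets A" "sets Q = sets A"
    and g: "g \<in> measurable A T" and \<kappa>: "0 \<le> \<kappa>" "\<kappa> \<le> 1"
    and mix: "\<And>S. S \<in> sets A \<Longrightarrow> emeasure Q S = ennreal \<kappa> * emeasure A S + ennreal (1 - \<kappa>) * emeasure R S"
    and d_meas: "(\<lambda>p. d (fst p) (snd p)) \<in> borel_measurable (T \<Otimes>\<^sub>M T)"
    and d_diag: "\<And>\<omega>. \<omega> \<in> space A \<Longrightarrow> d (g \<omega>) (g \<omega>) = 0"
    and d_le: "\<And>\<omega> \<omega>'. \<omega> \<in> space A \<Longrightarrow> \<omega>' \<in> space A \<Longrightarrow> d (g \<omega>) (g \<omega>') \<le> D"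
  shows "wasserstein1 d (distr A T g) (distr Q T g) \<le> ennreal ((1 - \<kappa>) * D)"
proof -
  interpret AR: pair_prob_space A R
    using A R by (simp add: pair_prob_space_def pair_sigma_finite_def prob_space_imp_sigma_finite)
  have space_R: "space R = space A"
    using \<open>sets R = sets A\<close> by (rule sets_eq_imp_space_eq)
  have "(\<integral>\<^sup>+ p. ennreal (d (fst p) (snd p)) \<partial>mixture_coupling \<kappa> A R T g)
      = ennreal \<kappa> * (\<integral>\<^sup>+ \<omega>. ennreal (d (g \<omega>) (g \<omega>)) \<partial>A)
        + ennreal (1 - \<kappa>) * (\<integral>\<^sup>+ p. ennreal (d (g (fst p)) (g (snd p))) \<partial>(A \<Otimes>\<^sub>M R))"
    using nn_integral_mixture_coupling[OF A R \<open>sets R = sets A\<close> g, of "\<lambda>p. ennreal (d (fst p) (snd p))"] d_meas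
    by simp
  also have "(\<integral>\<^sup>+ \<omega>. ennreal (d (g \<omega>) (g \<omega>)) \<partial>A) = 0"
    by (rule nn_integral_zero') (simp add: AE_I2 d_diag)
  also have "(\<integral>\<^sup>+ p. ennreal (d (g (fst p)) (g (snd p))) \<partial>(A \<Otimes>\<^sub>M R)) \<le> (\<integral>\<^sup>+ p. ennreal D \<partial>(A \<Otimes>\<^sub>M R))"
    by (rule nn_integral_mono) (auto simp: space_pair_measure space_R intro!: d_le ennreal_leI)
  also have "\<dots> = ennreal D"
    by (simp add: AR.P.emeasure_space_1)
  finally have "(\<integral>\<^sup>+ p. ennreal (d (fst p) (snd p)) \<partial>mixture_coupling \<kappa> A R T g) \<le> ennreal ((1 - \<kappa>) * D)"
    using \<kappa> by (simp add: mult_left_mono ennreal_mult')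
  then show ?thesis
    unfolding wasserstein1_def
    by (intro INF_lower2[OF mixture_coupling_in_couplings[OF assms(1-7) mix]])
qed

section \<open>Dominated densities\<close>

lemma ennreal_convex_combination_eq_1:
  assumes "0 \<le> \<kappa>" "\<kappa> < 1" and eq: "ennreal \<kappa> + ennreal (1 - \<kappa>) * X = 1"
  shows "X = 1"
proof (cases X rule: ennreal_cases)
  case (real x)
  have "ennreal (\<kappa> + (1 - \<kappa>) * x) = ennreal \<kappa> + ennreal (1 - \<kappa>) * X"
    using assms real by (simp add: ennreal_mult ennreal_plus)
  with eq have "\<kappa> + (1 - \<kappa>) * x = 1"
    by (simp only: ennreal_eq_1)
  then have "(1 - \<kappa>) * (x - 1) = 0"
    by (simp add: algebra_simps)
  with assms real show ?thesis
    by simp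
next
  case top
  with eq assms show ?thesis
    by (simp add: ennreal_mult_top)
qed

lemma density_mixture_decomposition:
  fixes a b :: "'a \<Rightarrow> real"
  assumes a: "a \<in> borel_measurable \<nu>" "\<And>p. 0 \<le> a p" "(\<integral>\<^sup>+ p. a p \<partial>\<nu>) = 1"
    and b: "b \<in> borel_measurable \<nu>" "(\<integral>\<^sup>+ p. b p \<partial>\<nu>) = 1"
    and \<kappa>: "0 \<le> \<kappa>" "\<kappa> < 1" and dominated: "AE p in \<nu>. \<kappa> * a p \<le> b p"
  obtains R where "prob_space R" "sets R = sets \<nu>"
    "\<And>S. S \<in> sets \<nu> \<Longrightarrow>
       emeasure (density \<nu> b) S = ennreal \<kappa> * emeasure (density \<nu> a) S + ennreal (1 - \<kappa>) * emeasure R S"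
proof -
  define r where "r p = (b p - \<kappa> * a p) / (1 - \<kappa>)" for p
  define R where "R = density \<nu> r"
  have r: "r \<in> borel_measurable \<nu>"
    unfolding r_def using a b by measurable
  have split: "AE p in \<nu>. ennreal (b p) = ennreal \<kappa> * ennreal (a p) + ennreal (1 - \<kappa>) * ennreal (r p)"
    using dominated
  proof eventually_elim
    case (elim p)
    then have "0 \<le> r p"
      using \<kappa> by (simp add: r_def)
    moreover have "b p = \<kappa> * a p + (1 - \<kappa>) * r p"
      using \<kappa> by (simp add: r_def)
    ultimately show ?case
      using \<kappa> a(2)[of p] by (simp add: ennreal_mult ennreal_plus)
  qed
  have mix: "emeasure (density \<nu> b) S = ennreal \<kappa> * emeasure (density \<nu> a) S + ennreal (1 - \<kappa>) * emeasure R S"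
    if S: "S \<in> sets \<nu>" for S
  proof -
    have [measurable]: "S \<in> sets \<nu>" "a \<in> borel_measurable \<nu>" "b \<in> borel_measurable \<nu>" "r \<in> borel_measurable \<nu>"
      using S a(1) b(1) r .
    have "emeasure (density \<nu> b) S = (\<integral>\<^sup>+p\<in>S. b p \<partial>\<nu>)"
      by (rule emeasure_density) simp_all
    also have "\<dots> = (\<integral>\<^sup>+p\<in>S. ennreal \<kappa> * a p + ennreal (1 - \<kappa>) * r p \<partial>\<nu>)"
      using split by (auto intro!: nn_integral_cong_AE)
    also have "\<dots> = ennreal \<kappa> * (\<integral>\<^sup>+p\<in>S. a p \<partial>\<nu>) + ennreal (1 - \<kappa>) * (\<integral>\<^sup>+p\<in>S. r p \<partial>\<nu>)"
      by (simp add: distrib_right mult.assoc nn_integral_add nn_integral_cmult)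
    also have "\<dots> = ennreal \<kappa> * emeasure (density \<nu> a) S + ennreal (1 - \<kappa>) * emeasure R S"
      unfolding R_def by (subst (1 2) emeasure_density) simp_all
    finally show ?thesis .
  qed
  have "prob_space R"
  proof (rule prob_spaceI)
    have "ennreal \<kappa> + ennreal (1 - \<kappa>) * emeasure R (space \<nu>) = 1"
      using mix[OF sets.top] a b by (simp add: emeasure_density)
    then show "emeasure R (space R) = 1"
      using ennreal_convex_combination_eq_1[OF \<kappa>] by (simp add: R_def)
  qed
  moreover have "sets R = sets \<nu>"
    by (simp add: R_def)
  ultimately show thesis
    using mix that by blast
qed

lemma wasserstein1_distr_density_le:
  fixes a b :: "'a \<Rightarrow> real"
  assumes a: "a \<in> borel_measurable \<nu>" "\<And>p. 0 \<le> a p" "(\<integral>\<^sup>+ p. a p \<partial>\<nu>) = 1"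
    and b: "b \<in> borel_measurable \<nu>" "(\<integral>\<^sup>+ p. b p \<partial>\<nu>) = 1"
    and \<kappa>: "0 \<le> \<kappa>" "\<kappa> \<le> 1" and dominated: "AE p in \<nu>. \<kappa> * a p \<le> b p"
    and g: "g \<in> measurable \<nu> T"
    and d_meas: "(\<lambda>p. d (fst p) (snd p)) \<in> borel_measurable (T \<Otimes>\<^sub>M T)"
    and d_diag: "\<And>\<omega>. \<omega> \<in> space \<nu> \<Longrightarrow> d (g \<omega>) (g \<omega>) = 0"
    and d_le: "\<And>\<omega> \<omega>'. \<omega> \<in> space \<nu> \<Longrightarrow> \<omega>' \<in> space \<nu> \<Longrightarrow> d (g \<omega>) (g \<omega>') \<le> D"
    and D: "0 \<le> D"
  shows "wasserstein1 d (distr (density \<nu> a) T g) (distr (density \<nu> b) T g) \<le> ennreal ((1 - \<kappa>) * D)"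
proof -
  let ?W = "wasserstein1 d (distr (density \<nu> a) T g) (distr (density \<nu> b) T g)"
  have A: "prob_space (density \<nu> a)"
    by (rule prob_spaceI) (simp add: emeasure_density a)
  have strict: "?W \<le> ennreal ((1 - \<kappa>') * D)" if "0 \<le> \<kappa>'" "\<kappa>' < 1" "\<kappa>' \<le> \<kappa>" for \<kappa>'
  proof -
    have "AE p in \<nu>. \<kappa>' * a p \<le> b p"
      using dominated by eventually_elim (metis a(2) mult_right_mono order.trans that(3))
    then obtain R where R: "prob_space R" "sets R = sets \<nu>"
      and mix: "\<And>S. S \<in> sets \<nu> \<Longrightarrow> emeasure (density \<nu> b) S
                  = ennreal \<kappa>' * emeasure (density \<nu> a) S + ennreal (1 - \<kappa>') * emeasure R S"
      using density_mixture_decomposition[OF a b \<open>0 \<le> \<kappa>'\<close> \<open>\<kappa>' < 1\<close>] by blast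
    show ?thesis
      by (rule wasserstein1_mixture_le[OF A R(1)]) (use that R(2) g d_meas d_diag d_le mix in auto)
  qed
  \<comment> \<open>The decomposition needs \<kappa> < 1, so \<kappa> = 1 is reached as a limit.\<close>
  show ?thesis
  proof (rule ennreal_le_epsilon)
    fix e :: real assume "0 < e"
    define \<kappa>' where "\<kappa>' = max 0 (\<kappa> - e / (D + 1))"
    have "0 < e / (D + 1)"
      using \<open>0 < e\<close> D by simp
    have real_bound: "(1 - \<kappa>') * D \<le> (1 - \<kappa>) * D + e"
    proof -
      have "(1 - \<kappa>') * D \<le> (1 - \<kappa> + e / (D + 1)) * D"
        using D by (intro mult_right_mono) (auto simp: \<kappa>'_def)
      also have "\<dots> = (1 - \<kappa>) * D + e * (D / (D + 1))"
        by (simp add: algebra_simps)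
      also have "e * (D / (D + 1)) \<le> e"
        using \<open>0 < e\<close> D by (intro mult_left_le) auto
      finally show ?thesis by simp
    qed
    have "?W \<le> ennreal ((1 - \<kappa>') * D)"
      using \<kappa> \<open>0 < e / (D + 1)\<close> by (intro strict) (auto simp: \<kappa>'_def)
    also have "\<dots> \<le> ennreal ((1 - \<kappa>) * D) + ennreal e"
      using real_bound \<kappa> D \<open>0 < e\<close> by (simp add: ennreal_plus[symmetric] del: ennreal_plus)
    finally show "?W \<le> ennreal ((1 - \<kappa>) * D) + ennreal e" .
  qed
qed

section \<open>Sections of product densities and elementary inequalities\<close>

lemma AE_nn_integral_section_eq_integral:
  fixes F :: "'a \<times> 'b \<Rightarrow> real"
  assumes N: "sigma_finite_measure N" and F: "F \<in> borel_measurable (M \<Otimes>\<^sub>M N)"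
    and nonneg: "\<And>p. 0 \<le> F p" and finite: "(\<integral>\<^sup>+ x. \<integral>\<^sup>+ y. F (x, y) \<partial>N \<partial>M) \<noteq> \<infinity>"
  shows "AE x in M. (\<integral>\<^sup>+ y. F (x, y) \<partial>N) = ennreal (\<integral> y. F (x, y) \<partial>N)"
proof -
  interpret N: sigma_finite_measure N by fact
  have "(\<lambda>x. \<integral>\<^sup>+ y. F (x, y) \<partial>N) \<in> borel_measurable M"
    using F by (intro N.borel_measurable_nn_integral_fst) measurable
  then have "AE x in M. (\<integral>\<^sup>+ y. F (x, y) \<partial>N) \<noteq> \<infinity>"
    using finite by (rule nn_integral_PInf_AE)
  then show ?thesis
  proof (rule AE_mp[OF _ AE_I2], intro impI)
    fix x assume x: "x \<in> space M" and "(\<integral>\<^sup>+ y. F (x, y) \<partial>N) \<noteq> \<infinity>"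
    moreover have "(\<lambda>y. F (x, y)) \<in> borel_measurable N"
      using F x by (rule measurable_Pair2)
    ultimately have "integrable N (\<lambda>y. F (x, y))"
      using nonneg by (intro integrableI_nonneg) (auto simp: top.not_eq_extremum)
    then show "(\<integral>\<^sup>+ y. F (x, y) \<partial>N) = ennreal (\<integral> y. F (x, y) \<partial>N)"
      using nonneg by (simp add: nn_integral_eq_integral)
  qed
qed

lemma (in pair_sigma_finite) AE_section_zero_if_nn_integral_zero:
  assumes H: "H \<in> borel_measurable (M1 \<Otimes>\<^sub>M M2)"
  shows "AE y in M2. AE x in M1. (\<integral>\<^sup>+ y'. H (x, y') \<partial>M2) = 0 \<longrightarrow> H (x, y) = 0"
proof -
  define Z where "Z = {x \<in> space M1. (\<integral>\<^sup>+ y. H (x, y) \<partial>M2) = 0}"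
  have Z: "Z \<in> sets M1"
    unfolding Z_def using H by measurable
  have HZ: "(\<lambda>p. H p * indicator Z (fst p)) \<in> borel_measurable (M1 \<Otimes>\<^sub>M M2)"
    using H Z by measurable
  have "(\<integral>\<^sup>+ y. \<integral>\<^sup>+ x. H (x, y) * indicator Z x \<partial>M1 \<partial>M2) = (\<integral>\<^sup>+ x. \<integral>\<^sup>+ y. H (x, y) * indicator Z x \<partial>M2 \<partial>M1)"
    using nn_integral_snd[OF HZ] M2.nn_integral_fst[OF HZ] by simp
  also have "\<dots> = (\<integral>\<^sup>+ x. (\<integral>\<^sup>+ y. H (x, y) \<partial>M2) * indicator Z x \<partial>M1)"
    using H by (intro nn_integral_cong) (simp add: nn_integral_multc measurable_Pair2)
  also have "\<dots> = 0"
    by (rule nn_integral_zero') (auto simp: Z_def split: split_indicator)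
  finally have "(\<integral>\<^sup>+ y. \<integral>\<^sup>+ x. H (x, y) * indicator Z x \<partial>M1 \<partial>M2) = 0" .
  moreover have "(\<lambda>y. \<integral>\<^sup>+ x. H (x, y) * indicator Z x \<partial>M1) \<in> borel_measurable M2"
    using H Z by measurable
  ultimately have "AE y in M2. (\<integral>\<^sup>+ x. H (x, y) * indicator Z x \<partial>M1) = 0"
    by (simp add: nn_integral_0_iff_AE)
  then show ?thesis
  proof (rule AE_mp[OF _ AE_I2], intro impI)
    fix y assume y: "y \<in> space M2" and "(\<integral>\<^sup>+ x. H (x, y) * indicator Z x \<partial>M1) = 0"
    moreover have "(\<lambda>x. H (x, y) * indicator Z x) \<in> borel_measurable M1"
      using H Z y by measurable
    ultimately have "AE x in M1. H (x, y) * indicator Z x = 0"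
      by (simp add: nn_integral_0_iff_AE)
    then show "AE x in M1. (\<integral>\<^sup>+ y'. H (x, y') \<partial>M2) = 0 \<longrightarrow> H (x, y) = 0"
      by (rule AE_mp[OF _ AE_I2]) (auto simp: Z_def split: split_indicator)
  qed
qed

lemma two_mult_sq_le_neg_ln_one_minus:
  fixes y :: real
  assumes "0 \<le> y" "y < 1"
  shows "2 * y\<^sup>2 \<le> - ln (1 - y)"
proof -
  have "(\<lambda>x. - ln (1 - x) - 2 * x\<^sup>2) 0 \<le> (\<lambda>x. - ln (1 - x) - 2 * x\<^sup>2) y"
  proof (rule DERIV_nonneg_imp_nondecreasing[OF \<open>0 \<le> y\<close>])
    fix x assume x: "0 \<le> x" "x \<le> y"
    with \<open>y < 1\<close> have "x < 1" by simp
    then have "DERIV (\<lambda>x. - ln (1 - x) - 2 * x\<^sup>2) x :> 1 / (1 - x) - 4 * x"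
      by (auto intro!: derivative_eq_intros simp: field_simps)
    moreover have "4 * x \<le> 1 / (1 - x)"
    proof -
      have "4 * x * (1 - x) \<le> 1"
        using sum_squares_ge_zero[of "2 * x - 1" 0] by (simp add: power2_eq_square algebra_simps)
      with \<open>x < 1\<close> show ?thesis
        by (simp add: field_simps)
    qed
    ultimately show "\<exists>d. DERIV (\<lambda>x. - ln (1 - x) - 2 * x\<^sup>2) x :> d \<and> 0 \<le> d"
      by auto
  qed
  then show ?thesis by simp
qed

lemma one_minus_inverse_sq_le_sqrt_ln:
  fixes G :: real
  assumes "1 \<le> G"
  shows "1 - 1 / G\<^sup>2 \<le> sqrt (ln G)"
proof -
  define y where "y = 1 - 1 / G\<^sup>2"
  have "1 \<le> G\<^sup>2"
    using assms by (simp add: one_le_power)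
  then have y: "0 \<le> y" "y < 1"
    using assms by (simp_all add: y_def)
  have "ln (1 - y) = - 2 * ln G"
    using assms by (simp add: y_def ln_div ln_realpow)
  then have "y\<^sup>2 \<le> ln G"
    using two_mult_sq_le_neg_ln_one_minus[OF y] by simp
  then show ?thesis
    using y by (simp add: y_def real_le_rsqrt)
qed

lemma inverse_weight_bounds:
  fixes e e' \<phi> \<phi>' \<Gamma>\<^sub>t \<Gamma>\<^sub>z p :: real
  assumes pos: "0 < e" "0 < e'" "0 < \<phi>" "0 < \<phi>'" and "0 \<le> p"
    and e_ratio: "1 / \<Gamma>\<^sub>t \<le> e' / e" "e' / e \<le> \<Gamma>\<^sub>t"
    and \<phi>_ratio: "1 / \<Gamma>\<^sub>z \<le> \<phi>' / \<phi>" "\<phi>' / \<phi> \<le> \<Gamma>\<^sub>z"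
  shows "p / (\<Gamma>\<^sub>t * \<Gamma>\<^sub>z) \<le> \<phi> * e * p / (\<phi>' * e')"
    and "\<phi> * e * p / (\<phi>' * e') \<le> \<Gamma>\<^sub>t * \<Gamma>\<^sub>z * p"
proof -
  define u where "u = e' / e * (\<phi>' / \<phi>)"
  have u: "\<phi> * e * p / (\<phi>' * e') = p / u"
    using pos by (simp add: u_def field_simps)
  have "0 < e' / e" "0 < \<phi>' / \<phi>"
    using pos by simp_all
  then have "0 < u"
    unfolding u_def by (rule mult_pos_pos)
  have \<Gamma>: "0 < \<Gamma>\<^sub>t" "0 < \<Gamma>\<^sub>z"
    using \<open>0 < e' / e\<close> \<open>0 < \<phi>' / \<phi>\<close> e_ratio(2) \<phi>_ratio(2) by linarith+
  have "u \<le> \<Gamma>\<^sub>t * \<Gamma>\<^sub>z"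
    unfolding u_def using e_ratio(2) \<phi>_ratio(2) \<Gamma> \<open>0 < \<phi>' / \<phi>\<close> by (intro mult_mono) auto
  then show "p / (\<Gamma>\<^sub>t * \<Gamma>\<^sub>z) \<le> \<phi> * e * p / (\<phi>' * e')"
    unfolding u using \<open>0 \<le> p\<close> \<open>0 < u\<close> \<Gamma> by (intro divide_left_mono) auto
  have "1 / \<Gamma>\<^sub>t * (1 / \<Gamma>\<^sub>z) \<le> u"
    unfolding u_def using e_ratio(1) \<phi>_ratio(1) \<Gamma> \<open>0 < e' / e\<close> by (intro mult_mono) auto
  then have "p / u \<le> p / (1 / \<Gamma>\<^sub>t * (1 / \<Gamma>\<^sub>z))"
    using \<open>0 \<le> p\<close> \<open>0 < u\<close> \<Gamma> by (intro divide_left_mono) auto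
  then show "\<phi> * e * p / (\<phi>' * e') \<le> \<Gamma>\<^sub>t * \<Gamma>\<^sub>z * p"
    unfolding u by (simp add: mult.commute)
qed

section \<open>Joint densities and factorised propensity scores\<close>

lemma sigma_finite_tz_ref: "sigma_finite_measure tz_ref"
  unfolding tz_ref_def
  by (intro sigma_finite_pair_measure sigma_finite_measure_count_space_finite
        lborel.sigma_finite_measure_axioms) simp

lemma measurable_rep_map:
  assumes "\<Phi> \<in> borel_measurable \<mu>"
  shows "rep_map \<Phi> \<in> measurable (\<mu> \<Otimes>\<^sub>M tz_ref) target_space"
proof -
  have sets_tz_ref: "sets tz_ref = sets (count_space UNIV \<Otimes>\<^sub>M (borel :: real measure))"
    unfolding tz_ref_def by (rule sets_pair_measure_cong) simp_all
  have snd: "snd \<in> measurable (\<mu> \<Otimes>\<^sub>M tz_ref) (count_space UNIV \<Otimes>\<^sub>M (borel :: real measure))"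
    using measurable_snd[of \<mu> tz_ref] unfolding measurable_cong_sets[OF refl sets_tz_ref] .
  have "rep_map \<Phi> = (\<lambda>p. (\<Phi> (fst p), snd p))"
    by (simp add: rep_map_def fun_eq_iff split_beta')
  then show ?thesis
    unfolding target_space_def using snd by (simp add: measurable_Pair measurable_compose[OF measurable_fst assms])
qed

lemma measurable_rep_cost:
  "(\<lambda>p. rep_cost (fst p) (snd p)) \<in> borel_measurable (target_space \<Otimes>\<^sub>M (target_space :: ('r::euclidean_space \<times> bool \<times> real) measure))"
proof -
  have "(\<lambda>p. fst (fst p)) \<in> borel_measurable (target_space \<Otimes>\<^sub>M (target_space :: ('r \<times> bool \<times> real) measure))"
    "(\<lambda>p. fst (snd p)) \<in> borel_measurable (target_space \<Otimes>\<^sub>M (target_space :: ('r \<times> bool \<times> real) measure))"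
    unfolding target_space_def by (rule measurable_compose[OF measurable_fst measurable_fst]
        measurable_compose[OF measurable_snd measurable_fst])+
  then show ?thesis
    unfolding rep_cost_def by (rule measurable_compose[OF borel_measurable_diff borel_measurable_norm])
qed

locale joint_density =
  fixes \<mu> :: "'x measure" and f :: "'x \<Rightarrow> bool \<Rightarrow> real \<Rightarrow> real"
  assumes sigma_finite_\<mu>: "sigma_finite_measure \<mu>"
    and f_measurable: "(\<lambda>(x, t, z). f x t z) \<in> borel_measurable (\<mu> \<Otimes>\<^sub>M tz_ref)"
    and f_nonneg: "\<And>x t z. 0 \<le> f x t z"
    and f_prob: "(\<integral>\<^sup>+ w. ennreal ((\<lambda>(x, t, z). f x t z) w) \<partial>(\<mu> \<Otimes>\<^sub>M tz_ref)) = 1"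
begin

sublocale pair_sigma_finite \<mu> tz_ref
  using sigma_finite_\<mu> sigma_finite_tz_ref by (simp add: pair_sigma_finite_def)

lemma f_measurable_fst_snd: "(\<lambda>p. f (fst p) (fst (snd p)) (snd (snd p))) \<in> borel_measurable (\<mu> \<Otimes>\<^sub>M tz_ref)"
  using f_measurable by (simp add: split_beta')

lemma f_measurable_swap: "(\<lambda>p. f (snd p) (fst (fst p)) (snd (fst p))) \<in> borel_measurable (tz_ref \<Otimes>\<^sub>M \<mu>)"
  using measurable_comp[OF measurable_pair_swap' f_measurable_fst_snd] by (simp add: comp_def split_beta')

lemma px_measurable: "px f \<in> borel_measurable \<mu>"
  unfolding px_def[abs_def] using f_measurable_fst_snd
  by (intro M2.borel_measurable_lebesgue_integral) (simp add: split_beta')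

lemma ptz_measurable: "(\<lambda>tz. ptz \<mu> f (fst tz) (snd tz)) \<in> borel_measurable tz_ref"
  unfolding ptz_def using f_measurable_swap
  by (intro M1.borel_measurable_lebesgue_integral) (simp add: split_beta')

lemma px_nonneg: "0 \<le> px f x"
  unfolding px_def by (rule integral_nonneg_AE) (simp add: f_nonneg)

lemma ptz_nonneg: "0 \<le> ptz \<mu> f t z"
  unfolding ptz_def by (rule integral_nonneg_AE) (simp add: f_nonneg)

lemma nn_integral_f_fst: "(\<integral>\<^sup>+ x. \<integral>\<^sup>+ tz. f x (fst tz) (snd tz) \<partial>tz_ref \<partial>\<mu>) = 1"
  using M2.nn_integral_fst[of "\<lambda>p. ennreal (f (fst p) (fst (snd p)) (snd (snd p)))"] f_measurable_fst_snd f_prob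
  by (simp add: split_beta')

lemma nn_integral_f_snd: "(\<integral>\<^sup>+ tz. \<integral>\<^sup>+ x. f x (fst tz) (snd tz) \<partial>\<mu> \<partial>tz_ref) = 1"
  using nn_integral_snd[of "\<lambda>p. ennreal (f (fst p) (fst (snd p)) (snd (snd p)))"] f_measurable_fst_snd f_prob
  by (simp add: split_beta')

lemma AE_px: "AE x in \<mu>. (\<integral>\<^sup>+ tz. f x (fst tz) (snd tz) \<partial>tz_ref) = ennreal (px f x)"
  using AE_nn_integral_section_eq_integral[OF sigma_finite_tz_ref f_measurable_fst_snd] f_nonneg nn_integral_f_fst
  by (simp add: px_def)

lemma AE_ptz: "AE tz in tz_ref. (\<integral>\<^sup>+ x. f x (fst tz) (snd tz) \<partial>\<mu>) = ennreal (ptz \<mu> f (fst tz) (snd tz))"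
  using AE_nn_integral_section_eq_integral[OF sigma_finite_\<mu> f_measurable_swap] f_nonneg nn_integral_f_snd
  by (simp add: ptz_def)

lemma nn_integral_px: "(\<integral>\<^sup>+ x. px f x \<partial>\<mu>) = 1"
proof -
  have "(\<integral>\<^sup>+ x. px f x \<partial>\<mu>) = (\<integral>\<^sup>+ x. \<integral>\<^sup>+ tz. f x (fst tz) (snd tz) \<partial>tz_ref \<partial>\<mu>)"
    using AE_px by (intro nn_integral_cong_AE) auto
  then show ?thesis
    by (simp add: nn_integral_f_fst)
qed

lemma nn_integral_ptz: "(\<integral>\<^sup>+ tz. ptz \<mu> f (fst tz) (snd tz) \<partial>tz_ref) = 1"
proof -
  have "(\<integral>\<^sup>+ tz. ptz \<mu> f (fst tz) (snd tz) \<partial>tz_ref) = (\<integral>\<^sup>+ tz. \<integral>\<^sup>+ x. f x (fst tz) (snd tz) \<partial>\<mu> \<partial>tz_ref)"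
    using AE_ptz by (intro nn_integral_cong_AE) auto
  then show ?thesis
    by (simp add: nn_integral_f_snd)
qed

lemma integrable_px: "integrable \<mu> (px f)" and integral_px: "(\<integral> x. px f x \<partial>\<mu>) = 1"
  using nn_integral_eq_integrable[OF px_measurable AE_I2[OF px_nonneg], of 1] nn_integral_px by simp_all

lemma AE_f_zero_if_px_zero: "AE tz in tz_ref. AE x in \<mu>. px f x = 0 \<longrightarrow> f x (fst tz) (snd tz) = 0"
  using AE_section_zero_if_nn_integral_zero[OF measurable_compose[OF f_measurable_fst_snd measurable_ennreal]]
proof eventually_elim
  case (elim tz)
  from elim AE_px show ?case
    by eventually_elim (use f_nonneg in auto)
qed

lemma product_density_measurable:
  "(\<lambda>(x, t, z). px f x * ptz \<mu> f t z) \<in> borel_measurable (\<mu> \<Otimes>\<^sub>M tz_ref)"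
  using px_measurable ptz_measurable by (simp add: split_beta')

lemma nn_integral_product_density:
  "(\<integral>\<^sup>+ p. ennreal ((\<lambda>(x, t, z). px f x * ptz \<mu> f t z) p) \<partial>(\<mu> \<Otimes>\<^sub>M tz_ref)) = 1"
proof -
  have "(\<integral>\<^sup>+ p. ennreal ((\<lambda>(x, t, z). px f x * ptz \<mu> f t z) p) \<partial>(\<mu> \<Otimes>\<^sub>M tz_ref))
      = (\<integral>\<^sup>+ x. \<integral>\<^sup>+ tz. ennreal (px f x) * ennreal (ptz \<mu> f (fst tz) (snd tz)) \<partial>tz_ref \<partial>\<mu>)"
    using M2.nn_integral_fst[OF measurable_compose[OF product_density_measurable measurable_ennreal]]
    by (simp add: split_beta' ennreal_mult px_nonneg ptz_nonneg)
  also have "\<dots> = 1"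
    using ptz_measurable by (simp add: nn_integral_cmult nn_integral_ptz nn_integral_px)
  finally show ?thesis .
qed

lemma P_prod_eq_distr_density:
  "P_prod \<mu> f \<Phi> =
     distr (density (\<mu> \<Otimes>\<^sub>M tz_ref) (\<lambda>(x, t, z). ennreal (px f x * ptz \<mu> f t z))) target_space (rep_map \<Phi>)"
proof -
  have "prob_space (density tz_ref (\<lambda>tz. ennreal (ptz \<mu> f (fst tz) (snd tz))))"
    using ptz_measurable by (intro prob_spaceI) (simp add: emeasure_density nn_integral_ptz)
  then have "density \<mu> (\<lambda>x. ennreal (px f x)) \<Otimes>\<^sub>M density tz_ref (\<lambda>tz. ennreal (ptz \<mu> f (fst tz) (snd tz)))
      = density (\<mu> \<Otimes>\<^sub>M tz_ref) (\<lambda>(x, tz). ennreal (px f x) * ennreal (ptz \<mu> f (fst tz) (snd tz)))"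
    using px_measurable ptz_measurable
    by (intro pair_measure_density sigma_finite_tz_ref prob_space_imp_sigma_finite) simp_all
  also have "(\<lambda>(x, tz). ennreal (px f x) * ennreal (ptz \<mu> f (fst tz) (snd tz)))
      = (\<lambda>(x, t, z). ennreal (px f x * ptz \<mu> f t z))"
    by (simp add: fun_eq_iff ennreal_mult px_nonneg ptz_nonneg)
  finally show ?thesis
    by (simp add: P_prod_def)
qed

end

locale factorised_propensity = joint_density \<mu> f
  for \<mu> :: "'x measure" and f :: "'x \<Rightarrow> bool \<Rightarrow> real \<Rightarrow> real" +
  fixes xt :: "'x \<Rightarrow> 'a" and xz :: "'x \<Rightarrow> 'b"
    and e e\<^sub>\<eta> :: "bool \<Rightarrow> 'a \<Rightarrow> real"
    and \<phi> \<phi>\<^sub>\<eta> :: "real \<Rightarrow> 'b \<Rightarrow> real"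
    and \<Gamma>\<^sub>t \<Gamma>\<^sub>z :: real
  assumes f_supp: "\<And>x t z. z \<notin> {0..1} \<Longrightarrow> f x t z = 0"
    and overlap: "\<And>x t z. px f x > 0 \<Longrightarrow> z \<in> {0..1} \<Longrightarrow> psi f x t z > 0"
    and factor: "\<And>x t z. px f x > 0 \<Longrightarrow> z \<in> {0..1} \<Longrightarrow> psi f x t z = \<phi> z (xz x) * e t (xt x)"
    and e_norm: "\<And>x. px f x > 0 \<Longrightarrow> e True (xt x) + e False (xt x) = 1"
    and e_eta_meas: "\<And>t. (\<lambda>x. e\<^sub>\<eta> t (xt x)) \<in> borel_measurable \<mu>"
    and phi_eta_meas: "(\<lambda>(x, z). \<phi>\<^sub>\<eta> z (xz x)) \<in> borel_measurable (\<mu> \<Otimes>\<^sub>M lborel)"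
    and e_eta_pos: "\<And>t a. e\<^sub>\<eta> t a > 0"
    and phi_eta_pos: "\<And>z b. \<phi>\<^sub>\<eta> z b > 0"
    and Gt: "\<Gamma>\<^sub>t \<ge> 1" and Gz: "\<Gamma>\<^sub>z \<ge> 1"
    and e_ratio: "\<And>x t. px f x > 0 \<Longrightarrow>
                   1 / \<Gamma>\<^sub>t \<le> e\<^sub>\<eta> t (xt x) / e t (xt x) \<and> e\<^sub>\<eta> t (xt x) / e t (xt x) \<le> \<Gamma>\<^sub>t"
    and phi_ratio: "\<And>x z. px f x > 0 \<Longrightarrow> z \<in> {0..1} \<Longrightarrow>
                   1 / \<Gamma>\<^sub>z \<le> \<phi>\<^sub>\<eta> z (xz x) / \<phi> z (xz x) \<and> \<phi>\<^sub>\<eta> z (xz x) / \<phi> z (xz x) \<le> \<Gamma>\<^sub>z"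
    and c_finite: "\<And>t z. integrable \<mu> (\<lambda>x. (1 / (\<phi>\<^sub>\<eta> z (xz x) * e\<^sub>\<eta> t (xt x))) * cond_x \<mu> f x t z)"
begin

definition w\<^sub>\<eta> :: "bool \<Rightarrow> real \<Rightarrow> 'x \<Rightarrow> real" where
  "w\<^sub>\<eta> t z x = 1 / (\<phi>\<^sub>\<eta> z (xz x) * e\<^sub>\<eta> t (xt x))"

lemma w\<^sub>\<eta>_pos: "0 < w\<^sub>\<eta> t z x"
  by (simp add: w\<^sub>\<eta>_def e_eta_pos phi_eta_pos)

lemma Gamma_ge_1: "1 \<le> \<Gamma>\<^sub>t * \<Gamma>\<^sub>z"
  using Gt Gz mult_mono[of 1 \<Gamma>\<^sub>t 1 \<Gamma>\<^sub>z] by simp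

lemma propensities_pos:
  assumes "0 < px f x" "z \<in> {0..1}"
  shows "0 < e t (xt x)" "0 < \<phi> z (xz x)"
proof -
  have "0 < \<phi> z (xz x) * e t' (xt x)" for t'
    using overlap[OF assms] factor[OF assms] by metis
  moreover have "0 < e True (xt x) \<or> 0 < e False (xt x)"
    using e_norm[OF assms(1)] by linarith
  ultimately have "0 < \<phi> z (xz x)"
    by (metis zero_less_mult_pos2)
  then show "0 < \<phi> z (xz x)" "0 < e t (xt x)"
    using \<open>0 < \<phi> z (xz x) * e t (xt x)\<close> by (simp_all add: zero_less_mult_iff)
qed

lemma f_factor:
  assumes "0 < px f x" "z \<in> {0..1}"
  shows "f x t z = \<phi> z (xz x) * e t (xt x) * px f x"
  using factor[OF assms, of t] assms(1) by (simp add: psi_def field_simps)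

lemma weighted_f_bounds:
  assumes "0 < px f x" "z \<in> {0..1}"
  shows "px f x / (\<Gamma>\<^sub>t * \<Gamma>\<^sub>z) \<le> w\<^sub>\<eta> t z x * f x t z"
    and "w\<^sub>\<eta> t z x * f x t z \<le> \<Gamma>\<^sub>t * \<Gamma>\<^sub>z * px f x"
  using inverse_weight_bounds[OF propensities_pos(1)[OF assms] e_eta_pos propensities_pos(2)[OF assms]
      phi_eta_pos less_imp_le[OF assms(1)]] e_ratio[OF assms(1), of t] phi_ratio[OF assms]
  by (simp_all add: w\<^sub>\<eta>_def f_factor[OF assms])

lemma AE_weighted_f_bounds:
  assumes null: "AE x in \<mu>. px f x = 0 \<longrightarrow> f x t z = 0" and z: "z \<in> {0..1}"
  shows "AE x in \<mu>. px f x / (\<Gamma>\<^sub>t * \<Gamma>\<^sub>z) \<le> w\<^sub>\<eta> t z x * f x t z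
                     \<and> w\<^sub>\<eta> t z x * f x t z \<le> \<Gamma>\<^sub>t * \<Gamma>\<^sub>z * px f x"
  using null
proof eventually_elim
  case (elim x)
  show ?case
  proof (cases "px f x = 0")
    case False
    then have "0 < px f x"
      using px_nonneg[of x] by simp
    then show ?thesis
      using weighted_f_bounds[OF _ z] by blast
  qed (use elim in simp)
qed

lemma ptz_pos_imp_support: "0 < ptz \<mu> f t z \<Longrightarrow> z \<in> {0..1}"
  by (rule ccontr) (simp add: ptz_def f_supp)

lemma integrable_weighted_f:
  assumes "0 < ptz \<mu> f t z"
  shows "integrable \<mu> (\<lambda>x. w\<^sub>\<eta> t z x * f x t z)"
proof -
  have "(\<lambda>x. w\<^sub>\<eta> t z x * f x t z) = (\<lambda>x. ptz \<mu> f t z * (1 / (\<phi>\<^sub>\<eta> z (xz x) * e\<^sub>\<eta> t (xt x)) * cond_x \<mu> f x t z))"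
    using assms by (simp add: fun_eq_iff w\<^sub>\<eta>_def cond_x_def)
  then show ?thesis
    using integrable_mult_right[OF c_finite] by metis
qed

lemma integral_weighted_f_bounds:
  assumes null: "AE x in \<mu>. px f x = 0 \<longrightarrow> f x t z = 0" and pos: "0 < ptz \<mu> f t z"
  shows "1 / (\<Gamma>\<^sub>t * \<Gamma>\<^sub>z) \<le> (\<integral> x. w\<^sub>\<eta> t z x * f x t z \<partial>\<mu>)"
    and "(\<integral> x. w\<^sub>\<eta> t z x * f x t z \<partial>\<mu>) \<le> \<Gamma>\<^sub>t * \<Gamma>\<^sub>z"
proof -
  note bounds = AE_weighted_f_bounds[OF null ptz_pos_imp_support[OF pos]]
  have "(\<integral> x. px f x / (\<Gamma>\<^sub>t * \<Gamma>\<^sub>z) \<partial>\<mu>) \<le> (\<integral> x. w\<^sub>\<eta> t z x * f x t z \<partial>\<mu>)"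
    using bounds integrable_px by (intro integral_mono_AE integrable_weighted_f[OF pos]) auto
  then show "1 / (\<Gamma>\<^sub>t * \<Gamma>\<^sub>z) \<le> (\<integral> x. w\<^sub>\<eta> t z x * f x t z \<partial>\<mu>)"
    by (simp add: integral_px)
  have "(\<integral> x. w\<^sub>\<eta> t z x * f x t z \<partial>\<mu>) \<le> (\<integral> x. \<Gamma>\<^sub>t * \<Gamma>\<^sub>z * px f x \<partial>\<mu>)"
    using bounds integrable_px by (intro integral_mono_AE integrable_weighted_f[OF pos]) auto
  then show "(\<integral> x. w\<^sub>\<eta> t z x * f x t z \<partial>\<mu>) \<le> \<Gamma>\<^sub>t * \<Gamma>\<^sub>z"
    by (simp add: integral_px)
qed

lemma q_density_eq:
  assumes null: "AE x in \<mu>. px f x = 0 \<longrightarrow> f x t z = 0" and pos: "0 < ptz \<mu> f t z"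
  defines "I \<equiv> \<integral> x. w\<^sub>\<eta> t z x * f x t z \<partial>\<mu>"
  shows "0 < I" and "q_cond \<mu> f w\<^sub>\<eta> x t z * ptz \<mu> f t z = w\<^sub>\<eta> t z x * f x t z * (ptz \<mu> f t z / I)"
proof -
  have "0 < 1 / (\<Gamma>\<^sub>t * \<Gamma>\<^sub>z)"
    using Gamma_ge_1 by simp
  with integral_weighted_f_bounds(1)[OF null pos] show "0 < I"
    unfolding I_def by linarith
  with pos show "q_cond \<mu> f w\<^sub>\<eta> x t z * ptz \<mu> f t z = w\<^sub>\<eta> t z x * f x t z * (ptz \<mu> f t z / I)"
    by (simp add: q_cond_def cnorm_def cond_x_def I_def field_simps)
qed

lemma AE_q_density_section_lower:
  assumes null: "AE x in \<mu>. px f x = 0 \<longrightarrow> f x t z = 0"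
  shows "AE x in \<mu>. px f x * ptz \<mu> f t z / (\<Gamma>\<^sub>t * \<Gamma>\<^sub>z)\<^sup>2 \<le> q_cond \<mu> f w\<^sub>\<eta> x t z * ptz \<mu> f t z"
proof (cases "ptz \<mu> f t z = 0")
  case False
  then have pos: "0 < ptz \<mu> f t z"
    using ptz_nonneg[of t z] by simp
  note I = integral_weighted_f_bounds[OF null pos] q_density_eq[OF null pos]
  have "0 < \<Gamma>\<^sub>t * \<Gamma>\<^sub>z"
    using Gamma_ge_1 by simp
  from AE_weighted_f_bounds[OF null ptz_pos_imp_support[OF pos]] show ?thesis
  proof eventually_elim
    case (elim x)
    have "px f x * ptz \<mu> f t z / (\<Gamma>\<^sub>t * \<Gamma>\<^sub>z)\<^sup>2 = px f x / (\<Gamma>\<^sub>t * \<Gamma>\<^sub>z) * (ptz \<mu> f t z / (\<Gamma>\<^sub>t * \<Gamma>\<^sub>z))"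
      by (simp add: power2_eq_square)
    also have "\<dots> \<le> w\<^sub>\<eta> t z x * f x t z * (ptz \<mu> f t z / (\<integral> x. w\<^sub>\<eta> t z x * f x t z \<partial>\<mu>))"
      using elim I pos \<open>0 < \<Gamma>\<^sub>t * \<Gamma>\<^sub>z\<close> px_nonneg[of x] w\<^sub>\<eta>_pos[of t z x] f_nonneg[of x t z]
      by (intro mult_mono divide_left_mono) auto
    finally show ?case
      by (simp add: I)
  qed
qed simp

lemma nn_integral_q_density_section:
  assumes null: "AE x in \<mu>. px f x = 0 \<longrightarrow> f x t z = 0"
  shows "(\<integral>\<^sup>+ x. q_cond \<mu> f w\<^sub>\<eta> x t z * ptz \<mu> f t z \<partial>\<mu>) = ptz \<mu> f t z"
proof (cases "ptz \<mu> f t z = 0")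
  case False
  then have pos: "0 < ptz \<mu> f t z"
    using ptz_nonneg[of t z] by simp
  let ?I = "\<integral> x. w\<^sub>\<eta> t z x * f x t z \<partial>\<mu>"
  note I = q_density_eq[OF null pos]
  have "(\<integral>\<^sup>+ x. q_cond \<mu> f w\<^sub>\<eta> x t z * ptz \<mu> f t z \<partial>\<mu>) = ennreal (\<integral> x. w\<^sub>\<eta> t z x * f x t z * (ptz \<mu> f t z / ?I) \<partial>\<mu>)"
  proof (unfold I(2), rule nn_integral_eq_integral)
    show "integrable \<mu> (\<lambda>x. w\<^sub>\<eta> t z x * f x t z * (ptz \<mu> f t z / ?I))"
      using integrable_weighted_f[OF pos] by simp
    show "AE x in \<mu>. 0 \<le> w\<^sub>\<eta> t z x * f x t z * (ptz \<mu> f t z / ?I)"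
      using pos I(1) w\<^sub>\<eta>_pos f_nonneg by (intro AE_I2 mult_nonneg_nonneg) (auto intro: less_imp_le)
  qed
  also have "\<dots> = ptz \<mu> f t z"
    using I(1) by simp
  finally show ?thesis .
qed simp

lemma w\<^sub>\<eta>_measurable: "(\<lambda>(x, t, z). w\<^sub>\<eta> t z x) \<in> borel_measurable (\<mu> \<Otimes>\<^sub>M tz_ref)"
proof -
  have fst_tz: "(\<lambda>p. fst (snd p)) \<in> measurable (\<mu> \<Otimes>\<^sub>M tz_ref) (count_space UNIV)"
    unfolding tz_ref_def by (rule measurable_compose[OF measurable_snd measurable_fst])
  have snd_tz: "(\<lambda>p. snd (snd p)) \<in> measurable (\<mu> \<Otimes>\<^sub>M tz_ref) lborel"
    unfolding tz_ref_def by (rule measurable_compose[OF measurable_snd measurable_snd])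
  have "(\<lambda>p. \<phi>\<^sub>\<eta> (snd (snd p)) (xz (fst p))) \<in> borel_measurable (\<mu> \<Otimes>\<^sub>M tz_ref)"
    using measurable_compose[OF measurable_Pair[OF measurable_fst snd_tz] phi_eta_meas] by simp
  moreover have "(\<lambda>p. e\<^sub>\<eta> (fst (snd p)) (xt (fst p))) \<in> borel_measurable (\<mu> \<Otimes>\<^sub>M tz_ref)"
  proof -
    have eq: "(\<lambda>p. e\<^sub>\<eta> (fst (snd p)) (xt (fst p)))
        = (\<lambda>p. if fst (snd p) then e\<^sub>\<eta> True (xt (fst p)) else e\<^sub>\<eta> False (xt (fst p)))"
      by (simp add: fun_eq_iff)
    have "{p \<in> space (\<mu> \<Otimes>\<^sub>M tz_ref). fst (snd p)} \<in> sets (\<mu> \<Otimes>\<^sub>M tz_ref)"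
      using measurable_sets[OF fst_tz, of "{True}"] by (simp add: vimage_def Int_def conj_commute)
    then show ?thesis
      unfolding eq by (intro measurable_If measurable_compose[OF measurable_fst e_eta_meas])
  qed
  ultimately show ?thesis
    by (simp add: w\<^sub>\<eta>_def split_beta')
qed

lemma q_density_measurable:
  "(\<lambda>(x, t, z). q_cond \<mu> f w\<^sub>\<eta> x t z * ptz \<mu> f t z) \<in> borel_measurable (\<mu> \<Otimes>\<^sub>M tz_ref)"
proof -
  have ptz: "(\<lambda>p. ptz \<mu> f (fst (snd p)) (snd (snd p))) \<in> borel_measurable (\<mu> \<Otimes>\<^sub>M tz_ref)"
    by (rule measurable_compose[OF measurable_snd ptz_measurable])
  have wc: "(\<lambda>p. w\<^sub>\<eta> (fst (snd p)) (snd (snd p)) (fst p) * cond_x \<mu> f (fst p) (fst (snd p)) (snd (snd p)))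
      \<in> borel_measurable (\<mu> \<Otimes>\<^sub>M tz_ref)"
    unfolding cond_x_def using w\<^sub>\<eta>_measurable
    by (intro borel_measurable_times borel_measurable_divide f_measurable_fst_snd ptz) (simp add: split_beta')
  have "(\<lambda>tz. cnorm \<mu> f w\<^sub>\<eta> (fst tz) (snd tz)) \<in> borel_measurable tz_ref"
    unfolding cnorm_def using measurable_comp[OF measurable_pair_swap' wc]
    by (intro M1.borel_measurable_lebesgue_integral) (simp add: split_beta' comp_def)
  then show ?thesis
    unfolding q_cond_def split_beta'
    by (intro borel_measurable_times borel_measurable_divide wc ptz measurable_compose[OF measurable_snd])
qed

lemma AE_q_density_lower:
  "AE p in \<mu> \<Otimes>\<^sub>M tz_ref. 1 / (\<Gamma>\<^sub>t * \<Gamma>\<^sub>z)\<^sup>2 * (\<lambda>(x, t, z). px f x * ptz \<mu> f t z) p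
                           \<le> (\<lambda>(x, t, z). q_cond \<mu> f w\<^sub>\<eta> x t z * ptz \<mu> f t z) p"
    (is "AE p in _. ?P p")
proof -
  let ?Q = "\<lambda>x tz. ?P (x, tz)"
  have sets: "{p \<in> space (\<mu> \<Otimes>\<^sub>M tz_ref). ?Q (fst p) (snd p)} \<in> sets (\<mu> \<Otimes>\<^sub>M tz_ref)"
    using product_density_measurable q_density_measurable by simp measurable
  have "AE tz in tz_ref. AE x in \<mu>. ?Q x tz"
    using AE_f_zero_if_px_zero by eventually_elim (use AE_q_density_section_lower in \<open>auto simp: split_beta'\<close>)
  then show ?thesis
    using AE_commute[OF sets] AE_pair_iff[OF sets] by simp
qed

lemma nn_integral_q_density:
  "(\<integral>\<^sup>+ p. ennreal ((\<lambda>(x, t, z). q_cond \<mu> f w\<^sub>\<eta> x t z * ptz \<mu> f t z) p) \<partial>(\<mu> \<Otimes>\<^sub>M tz_ref)) = 1"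
proof -
  have "(\<integral>\<^sup>+ p. ennreal ((\<lambda>(x, t, z). q_cond \<mu> f w\<^sub>\<eta> x t z * ptz \<mu> f t z) p) \<partial>(\<mu> \<Otimes>\<^sub>M tz_ref))
      = (\<integral>\<^sup>+ tz. \<integral>\<^sup>+ x. q_cond \<mu> f w\<^sub>\<eta> x (fst tz) (snd tz) * ptz \<mu> f (fst tz) (snd tz) \<partial>\<mu> \<partial>tz_ref)"
    using nn_integral_snd[OF measurable_compose[OF q_density_measurable measurable_ennreal]]
    by (simp add: split_beta')
  also have "\<dots> = (\<integral>\<^sup>+ tz. ptz \<mu> f (fst tz) (snd tz) \<partial>tz_ref)"
  proof (rule nn_integral_cong_AE)
    show "AE tz in tz_ref. (\<integral>\<^sup>+ x. q_cond \<mu> f w\<^sub>\<eta> x (fst tz) (snd tz) * ptz \<mu> f (fst tz) (snd tz) \<partial>\<mu>)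
        = ptz \<mu> f (fst tz) (snd tz)"
      using AE_f_zero_if_px_zero by eventually_elim (rule nn_integral_q_density_section)
  qed
  finally show ?thesis
    by (simp add: nn_integral_ptz)
qed

lemma wasserstein1_P_prod_Q_joint_le:
  fixes \<Phi> :: "'x \<Rightarrow> 'r::euclidean_space"
  assumes \<Phi>: "\<Phi> \<in> borel_measurable \<mu>" and range: "\<And>x. \<Phi> x \<in> Rs" and "bounded Rs"
  shows "wasserstein1 rep_cost (P_prod \<mu> f \<Phi>) (Q_joint \<mu> f w\<^sub>\<eta> \<Phi>)
           \<le> ennreal ((1 - 1 / (\<Gamma>\<^sub>t * \<Gamma>\<^sub>z)\<^sup>2) * diameter Rs)"
proof -
  let ?a = "\<lambda>(x, t, z). px f x * ptz \<mu> f t z"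
  let ?b = "\<lambda>(x, t, z). q_cond \<mu> f w\<^sub>\<eta> x t z * ptz \<mu> f t z"
  have diam: "dist (\<Phi> x) (\<Phi> x') \<le> diameter Rs" for x x'
    using diameter_bounded_bound[OF \<open>bounded Rs\<close> range range] .
  have "1 / (\<Gamma>\<^sub>t * \<Gamma>\<^sub>z)\<^sup>2 \<le> 1"
    using one_le_power[OF Gamma_ge_1, of 2] by (auto simp: divide_le_eq_1)
  then have "wasserstein1 rep_cost (distr (density (\<mu> \<Otimes>\<^sub>M tz_ref) (\<lambda>p. ennreal (?a p))) target_space (rep_map \<Phi>))
      (distr (density (\<mu> \<Otimes>\<^sub>M tz_ref) (\<lambda>p. ennreal (?b p))) target_space (rep_map \<Phi>))
      \<le> ennreal ((1 - 1 / (\<Gamma>\<^sub>t * \<Gamma>\<^sub>z)\<^sup>2) * diameter Rs)"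
    using product_density_measurable nn_integral_product_density q_density_measurable nn_integral_q_density
      AE_q_density_lower measurable_rep_map[OF \<Phi>] measurable_rep_cost diameter_ge_0[OF \<open>bounded Rs\<close>]
    by (intro wasserstein1_distr_density_le)
       (auto simp: px_nonneg ptz_nonneg rep_cost_def rep_map_def split_beta' dist_norm diam[unfolded dist_norm])
  then show ?thesis
    unfolding P_prod_eq_distr_density Q_joint_def by (simp add: split_beta')
qed

end

theorem theorem2:
  fixes \<mu> :: "'x measure"
    and f :: "'x \<Rightarrow> bool \<Rightarrow> real \<Rightarrow> real"
    and xt :: "'x \<Rightarrow> 'a" and xz :: "'x \<Rightarrow> 'b"
    and e e\<^sub>\<eta> :: "bool \<Rightarrow> 'a \<Rightarrow> real"
    and \<phi> \<phi>\<^sub>\<eta> :: "real \<Rightarrow> 'b \<Rightarrow> real"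
    and \<Gamma>\<^sub>t \<Gamma>\<^sub>z :: real
    and \<Phi> :: "'x \<Rightarrow> 'r::euclidean_space"
    and Rs :: "'r set"
  assumes sf: "sigma_finite_measure \<mu>"
    and f_meas: "(\<lambda>(x, t, z). f x t z) \<in> borel_measurable (\<mu> \<Otimes>\<^sub>M tz_ref)"
    and f_nonneg: "\<And>x t z. f x t z \<ge> 0"
    and f_supp: "\<And>x t z. z \<notin> {0..1} \<Longrightarrow> f x t z = 0"
    and f_prob: "(\<integral>\<^sup>+ w. ennreal ((\<lambda>(x, t, z). f x t z) w) \<partial>(\<mu> \<Otimes>\<^sub>M tz_ref)) = 1"
    and overlap: "\<And>x t z. px f x > 0 \<Longrightarrow> z \<in> {0..1} \<Longrightarrow> psi f x t z > 0"
    and factor: "\<And>x t z. px f x > 0 \<Longrightarrow> z \<in> {0..1} \<Longrightarrow>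
                   psi f x t z = \<phi> z (xz x) * e t (xt x)"
    and e_norm: "\<And>x. px f x > 0 \<Longrightarrow> e True (xt x) + e False (xt x) = 1"
    and phi_norm: "\<And>x. px f x > 0 \<Longrightarrow> (\<integral>z\<in>{0..1}. \<phi> z (xz x) \<partial>lborel) = 1"
    and e_meas: "\<And>t. (\<lambda>x. e t (xt x)) \<in> borel_measurable \<mu>"
    and e_eta_meas: "\<And>t. (\<lambda>x. e\<^sub>\<eta> t (xt x)) \<in> borel_measurable \<mu>"
    and phi_meas: "(\<lambda>(x, z). \<phi> z (xz x)) \<in> borel_measurable (\<mu> \<Otimes>\<^sub>M lborel)"
    and phi_eta_meas: "(\<lambda>(x, z). \<phi>\<^sub>\<eta> z (xz x)) \<in> borel_measurable (\<mu> \<Otimes>\<^sub>M lborel)"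
    and e_eta_pos: "\<And>t a. e\<^sub>\<eta> t a > 0"
    and phi_eta_pos: "\<And>z b. \<phi>\<^sub>\<eta> z b > 0"
    and Gt: "\<Gamma>\<^sub>t \<ge> 1" and Gz: "\<Gamma>\<^sub>z \<ge> 1"
    and e_ratio: "\<And>x t. px f x > 0 \<Longrightarrow>
                   1 / \<Gamma>\<^sub>t \<le> e\<^sub>\<eta> t (xt x) / e t (xt x) \<and> e\<^sub>\<eta> t (xt x) / e t (xt x) \<le> \<Gamma>\<^sub>t"
    and phi_ratio: "\<And>x z. px f x > 0 \<Longrightarrow> z \<in> {0..1} \<Longrightarrow>
                   1 / \<Gamma>\<^sub>z \<le> \<phi>\<^sub>\<eta> z (xz x) / \<phi> z (xz x) \<and> \<phi>\<^sub>\<eta> z (xz x) / \<phi> z (xz x) \<le> \<Gamma>\<^sub>z"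
    and c_finite: "\<And>t z. integrable \<mu>
                   (\<lambda>x. (1 / (\<phi>\<^sub>\<eta> z (xz x) * e\<^sub>\<eta> t (xt x))) * cond_x \<mu> f x t z)"
    and Phi_inj: "inj \<Phi>"
    and Phi_meas: "\<Phi> \<in> borel_measurable \<mu>"
    and Phi_range: "\<And>x. \<Phi> x \<in> Rs"
    and R_bounded: "bounded Rs"
  shows "wasserstein1 rep_cost
           (P_prod \<mu> f \<Phi>)
           (Q_joint \<mu> f (\<lambda>t z x. 1 / (\<phi>\<^sub>\<eta> z (xz x) * e\<^sub>\<eta> t (xt x))) \<Phi>)
         \<le> ennreal (diameter Rs * sqrt (ln \<Gamma>\<^sub>t + ln \<Gamma>\<^sub>z))"
proof -
  interpret factorised_propensity \<mu> f xt xz e e\<^sub>\<eta> \<phi> \<phi>\<^sub>\<eta> \<Gamma>\<^sub>t \<Gamma>\<^sub>z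
    by (intro factorised_propensity.intro joint_density.intro factorised_propensity_axioms.intro)
       (fact assms)+
  have "(\<lambda>t z x. 1 / (\<phi>\<^sub>\<eta> z (xz x) * e\<^sub>\<eta> t (xt x))) = w\<^sub>\<eta>"
    by (simp add: fun_eq_iff w\<^sub>\<eta>_def)
  then have "wasserstein1 rep_cost (P_prod \<mu> f \<Phi>) (Q_joint \<mu> f (\<lambda>t z x. 1 / (\<phi>\<^sub>\<eta> z (xz x) * e\<^sub>\<eta> t (xt x))) \<Phi>)
      \<le> ennreal ((1 - 1 / (\<Gamma>\<^sub>t * \<Gamma>\<^sub>z)\<^sup>2) * diameter Rs)"
    using wasserstein1_P_prod_Q_joint_le[OF Phi_meas Phi_range R_bounded] by simp
  also have "\<dots> \<le> ennreal (diameter Rs * sqrt (ln \<Gamma>\<^sub>t + ln \<Gamma>\<^sub>z))"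
  proof (rule ennreal_leI)
    have "ln \<Gamma>\<^sub>t + ln \<Gamma>\<^sub>z = ln (\<Gamma>\<^sub>t * \<Gamma>\<^sub>z)"
      using Gt Gz by (simp add: ln_mult)
    with diameter_ge_0[OF R_bounded] show "(1 - 1 / (\<Gamma>\<^sub>t * \<Gamma>\<^sub>z)\<^sup>2) * diameter Rs \<le> diameter Rs * sqrt (ln \<Gamma>\<^sub>t + ln \<Gamma>\<^sub>z)"
      using one_minus_inverse_sq_le_sqrt_ln[OF Gamma_ge_1] by (simp add: mult.commute mult_left_mono)
  qed
  finally show ?thesis .
qed

end
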